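(* Let $(Y_i, D_i, W_i)_{i=1}^N$ be i.i.d. draws from a distribution $P$, with $T_i = [1, D_i^\top]^\top$, $Z_i = [1,W_i^\top]^\top$, and $Y_i = T_i^\top\theta + U_i$ with $\mathbb{E}[U_i\mid W_i]=0$. Let $N=2n$, let $S_1,S_2$ partition $\{1,\dots,N\}$ into halves of size $n$ with $S_{-1}=S_2$, $S_{-2}=S_1$, let $\hat\Upsilon^{(j)}$ be a function estimated only from the data in $S_{-j}$, and set $\hat\Upsilon(Z_i) = \hat\Upsilon^{(j)}(Z_i)$ for $i\in S_j$. Assume: (1) there is a measurable $\Upsilon$ with $\mathbb{E}\|\hat\Upsilon^{(j)}(Z)-\Upsilon(Z)\|^2\to 0$ for $j=1,2$ (expectation over both $\hat\Upsilon^{(j)}$ and an independent draw $Z$); and (3) for some $\epsilon>0$, $\mathbb{E}|U|^{2+\epsilon}<\infty$, $\mathbb{E}\|U\Upsilon(Z)\|^{2+\epsilon}<\infty$, $\mathbb{E}\|T\|^2<\infty$, $\Omega = \mathbb{E}[U^2\Upsilon(Z)\Upsilon(Z)^\top]$ exists, and $\mathbb{E}[U^2\mid Z] < M$ a.s. for some $M<\infty$. Then $$\frac1N\sum_{i=1}^N\hat\Upsilon(Z_i)T_i^\top = \frac1N\sum_{i=1}^N\Upsilon(Z_i)T_i^\top + o_p(1),\qquad \frac{1}{\sqrt N}\sum_{i=1}^N\hat\Upsilon(Z_i)U_i = \frac1{\sqrt N}\sum_{i=1}^N\Upsilon(Z_i)U_i + o_p(1).$$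
   Context: $o_p(1)$ denotes a term converging to zero in probability as $N\to\infty$; $\|\cdot\|$ is the Euclidean norm. *)

theory Defs
  imports "HOL-Probability.Probability"
begin

definition aug :: "real^'n \<Rightarrow> real^('n option)" where
  "aug x = (\<chi> i. case i of None \<Rightarrow> 1 | Some j \<Rightarrow> x $ j)"

definition outer :: "real^'k \<Rightarrow> real^'t \<Rightarrow> real^'t^'k" where
  "outer v t = (\<chi> r c. v $ r * t $ c)"

definition op1 :: "'a measure \<Rightarrow> (nat \<Rightarrow> 'a \<Rightarrow> 'b::real_normed_vector) \<Rightarrow> bool" where
  "op1 M X \<longleftrightarrow> (\<forall>n. X n \<in> borel_measurable M) \<and>
     (\<forall>e>0. (\<lambda>n. measure M {\<omega> \<in> space M. e < norm (X n \<omega>)}) \<longlonglongrightarrow> 0)"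

end

theory Submission
  imports Defs
begin

text \<open>
  Write \<open>d\<^sub>i\<close> for the error of the cross-fitted estimate at observation \<open>i\<close>.
  For \<open>i\<close> in one half, the estimate is fitted on the other half, which is independent of
  observation \<open>i\<close>; so the joint law of (fit, observation) is a product and
  \<open>E \<parallel>d\<^sub>i\<parallel>\<^sup>2\<close> is exactly the mean squared error of that fit, which tends to 0.
  The first claim then follows from Cauchy--Schwarz, \<open>E (\<parallel>d\<^sub>i\<parallel> \<parallel>T\<^sub>i\<parallel>) \<le> (mse \<cdot> E \<parallel>T\<parallel>\<^sup>2)\<^sup>1\<^sup>/\<^sup>2\<close>,
  and Markov's inequality. For the second, within one half the terms \<open>U\<^sub>i d\<^sub>i\<close> are
  orthogonal in \<open>L\<^sup>2\<close>: given the fit and observation \<open>j\<close>, the cross term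
  \<open>E \<langle>U\<^sub>i d\<^sub>i, U\<^sub>j d\<^sub>j\<rangle>\<close> is \<open>E (U\<^sub>i h(Z\<^sub>i))\<close> for a function \<open>h\<close>, which vanishes since
  \<open>E[U | W] = 0\<close>. With \<open>E[U\<^sup>2 | Z] \<le> M\<close> this gives
  \<open>E \<parallel>N\<^sup>-\<^sup>1\<^sup>/\<^sup>2 \<Sum> U\<^sub>i d\<^sub>i\<parallel>\<^sup>2 \<le> M (mse\<^sub>1 + mse\<^sub>2) \<longrightarrow> 0\<close>, and Chebyshev's inequality concludes.
\<close>

section \<open>Convergence in probability from moment bounds\<close>

lemma ennreal_le_sqrt_if_power2_le:
  assumes "b ^ 2 \<le> ennreal c"
  shows "b \<le> ennreal (sqrt c)"
proof (cases b rule: ennreal_cases)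
  case (real r)
  with assms have "r ^ 2 \<le> max c 0"
    by (cases "0 \<le> c") (auto simp: ennreal_power ennreal_neg max_def)
  with real show ?thesis
    by (cases "0 \<le> c") (auto intro!: ennreal_leI real_le_rsqrt simp: max_def)
next
  case top
  with assms show ?thesis by (simp add: top_unique)
qed

lemma power2_norm_add_le:
  fixes a b :: "'a::real_normed_vector"
  shows "(norm (a + b))\<^sup>2 \<le> 2 * (norm a)\<^sup>2 + 2 * (norm b)\<^sup>2"
proof -
  have "(norm (a + b))\<^sup>2 \<le> (norm a + norm b)\<^sup>2"
    by (simp add: norm_triangle_ineq power_mono)
  also have "\<dots> \<le> 2 * (norm a)\<^sup>2 + 2 * (norm b)\<^sup>2"
    using sum_squares_bound[of "norm a" "norm b"] by (simp add: power2_sum)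
  finally show ?thesis .
qed

lemma power2_norm_scaleR_add_le:
  fixes a b :: "'a::real_normed_vector"
  assumes "0 < n"
  shows "(norm ((1 / sqrt (2 * n)) *\<^sub>R (a + b)))\<^sup>2 \<le> (1 / n) * (norm a)\<^sup>2 + (1 / n) * (norm b)\<^sup>2"
proof -
  have "(norm ((1 / sqrt (2 * n)) *\<^sub>R (a + b)))\<^sup>2 = (norm (a + b))\<^sup>2 / (2 * n)"
    using assms by (simp add: power_mult_distrib power_divide)
  also have "\<dots> \<le> (2 * (norm a)\<^sup>2 + 2 * (norm b)\<^sup>2) / (2 * n)"
    using assms by (intro divide_right_mono power2_norm_add_le) simp
  also have "\<dots> = (1 / n) * (norm a)\<^sup>2 + (1 / n) * (norm b)\<^sup>2"
    using assms by (simp add: field_simps)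
  finally show ?thesis .
qed

lemma op1_if_moment_tendsto_zero:
  fixes Z :: "nat \<Rightarrow> 'a \<Rightarrow> 'b::real_normed_vector" and p :: nat
  assumes Z_measurable: "\<And>n. Z n \<in> borel_measurable M" and "0 < p"
    and moment: "(\<lambda>n. \<integral>\<^sup>+\<omega>. ennreal (norm (Z n \<omega>)) ^ p \<partial>M) \<longlonglongrightarrow> 0"
  shows "op1 M Z"
  unfolding op1_def
proof (intro conjI allI impI)
  fix e :: real assume "0 < e"
  have Markov: "emeasure M {\<omega> \<in> space M. e < norm (Z n \<omega>)}
      \<le> ennreal (1 / e ^ p) * (\<integral>\<^sup>+\<omega>. ennreal (norm (Z n \<omega>)) ^ p \<partial>M)" for n
  proof -
    have "{\<omega> \<in> space M. e < norm (Z n \<omega>)} \<subseteq>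
        {\<omega> \<in> space M. 1 \<le> ennreal (1 / e ^ p) * ennreal (norm (Z n \<omega>)) ^ p}"
    proof safe
      fix \<omega> assume "e < norm (Z n \<omega>)"
      then have "e ^ p \<le> norm (Z n \<omega>) ^ p"
        using \<open>0 < e\<close> by (intro power_mono) auto
      then show "1 \<le> ennreal (1 / e ^ p) * ennreal (norm (Z n \<omega>)) ^ p"
        using \<open>0 < e\<close>
        by (simp add: ennreal_power ennreal_mult''[symmetric] ennreal_1[symmetric] del: ennreal_1)
    qed
    then have "emeasure M {\<omega> \<in> space M. e < norm (Z n \<omega>)}
        \<le> emeasure M {\<omega> \<in> space M. 1 \<le> ennreal (1 / e ^ p) * ennreal (norm (Z n \<omega>)) ^ p}"
      using Z_measurable[of n] by (intro emeasure_mono) measurable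
    also have "\<dots> \<le> ennreal (1 / e ^ p) * (\<integral>\<^sup>+\<omega>. ennreal (norm (Z n \<omega>)) ^ p * indicator (space M) \<omega> \<partial>M)"
      by (rule nn_integral_Markov_inequality[where u="\<lambda>\<omega>. ennreal (norm (Z n \<omega>)) ^ p"])
        (use Z_measurable[of n] in measurable)
    finally show ?thesis
      by (simp add: nn_integral_set_ennreal[symmetric])
  qed
  have bound_tendsto: "(\<lambda>n. ennreal (1 / e ^ p) * (\<integral>\<^sup>+\<omega>. ennreal (norm (Z n \<omega>)) ^ p \<partial>M)) \<longlonglongrightarrow> 0"
    using ennreal_tendsto_cmult[OF _ moment] by simp
  have "(\<lambda>n. emeasure M {\<omega> \<in> space M. e < norm (Z n \<omega>)}) \<longlonglongrightarrow> 0"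
    by (intro tendsto_sandwich[OF _ _ tendsto_const bound_tendsto] always_eventually allI Markov zero_le)
  then show "(\<lambda>n. measure M {\<omega> \<in> space M. e < norm (Z n \<omega>)}) \<longlonglongrightarrow> 0"
    unfolding measure_def by (intro tendsto_enn2real) simp_all
qed (fact Z_measurable)

lemma (in finite_measure) integrable_power2_if_integrable_abs_powr:
  fixes f :: "'a \<Rightarrow> real"
  assumes [measurable]: "f \<in> borel_measurable M" and "2 \<le> p"
    and integrable: "integrable M (\<lambda>x. \<bar>f x\<bar> powr p)"
  shows "integrable M (\<lambda>x. (f x)\<^sup>2)"
proof (rule Bochner_Integration.integrable_bound)
  show "integrable M (\<lambda>x. 1 + \<bar>f x\<bar> powr p)"
    using integrable by simp
  show "AE x in M. norm ((f x)\<^sup>2) \<le> norm (1 + \<bar>f x\<bar> powr p)"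
  proof (rule AE_I2)
    fix x
    have "(f x)\<^sup>2 \<le> 1 + \<bar>f x\<bar> powr p"
    proof (cases "\<bar>f x\<bar> \<le> 1")
      case True
      then have "(f x)\<^sup>2 \<le> 1"
        by (simp add: abs_square_le_1)
      then show ?thesis
        using powr_ge_zero[of "\<bar>f x\<bar>" p] by linarith
    next
      case False
      then have "(f x)\<^sup>2 = \<bar>f x\<bar> powr 2"
        by (simp add: powr_realpow[symmetric])
      also have "\<dots> \<le> \<bar>f x\<bar> powr p"
        using False \<open>2 \<le> p\<close> by (intro powr_mono) auto
      finally show ?thesis by simp
    qed
    then show "norm ((f x)\<^sup>2) \<le> norm (1 + \<bar>f x\<bar> powr p)"
      by simp
  qed
qed measurable

section \<open>Moment conditions from conditional expectations\<close>

lemma (in finite_measure) sigma_finite_subalgebra_vimage_algebra: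
  assumes "f \<in> measurable M N"
  shows "sigma_finite_subalgebra M (vimage_algebra (space M) f N)"
proof -
  have "subalgebra M (vimage_algebra (space M) f N)"
    unfolding subalgebra_def using sets_image_in_sets[OF refl assms] by simp
  then show ?thesis
    by (intro finite_measure_subalgebra_is_sigma_finite)
      (simp add: finite_measure_subalgebra_def finite_measure_subalgebra_axioms_def finite_measure_axioms)
qed

lemma measurable_vimage_algebra_compose:
  assumes "f \<in> measurable M N" "h \<in> measurable N K"
  shows "(\<lambda>\<omega>. h (f \<omega>)) \<in> measurable (vimage_algebra (space M) f N) K"
  using measurable_vimage_algebra1[of f "space M" N] measurable_space[OF assms(1)] assms(2)
  by (auto intro: measurable_compose)

lemma (in finite_measure) integral_mult_eq_0_if_real_cond_exp_eq_0:
  assumes W[measurable]: "W \<in> measurable M N" and h[measurable]: "h \<in> borel_measurable N"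
    and [measurable]: "U \<in> borel_measurable M"
    and integrable: "integrable M (\<lambda>\<omega>. h (W \<omega>) * U \<omega>)"
    and cond_exp: "AE \<omega> in M. real_cond_exp M (vimage_algebra (space M) W N) U \<omega> = 0"
  shows "(\<integral>\<omega>. h (W \<omega>) * U \<omega> \<partial>M) = 0"
proof -
  interpret sigma_finite_subalgebra M "vimage_algebra (space M) W N"
    using sigma_finite_subalgebra_vimage_algebra[OF W] .
  have "(\<integral>\<omega>. h (W \<omega>) * U \<omega> \<partial>M)
      = (\<integral>\<omega>. h (W \<omega>) * real_cond_exp M (vimage_algebra (space M) W N) U \<omega> \<partial>M)"
    using integrable measurable_vimage_algebra_compose[OF W h]
    by (intro real_cond_exp_intg(2)[symmetric]) auto
  also have "\<dots> = 0"
    using cond_exp by (subst integral_cong_AE[where g="\<lambda>_. 0"]) (auto elim: eventually_mono)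
  finally show ?thesis .
qed

lemma (in sigma_finite_subalgebra) AE_nn_cond_exp_le_if_real_cond_exp_le:
  assumes V: "integrable M V" "\<And>\<omega>. 0 \<le> V \<omega>"
    and cond_exp: "AE \<omega> in M. real_cond_exp M F V \<omega> \<le> c"
  shows "AE \<omega> in M. nn_cond_exp M F (\<lambda>\<omega>. ennreal (V \<omega>)) \<omega> \<le> ennreal c"
proof -
  have [measurable]: "V \<in> borel_measurable M"
    using V(1) by auto
  have "AE \<omega> in M. nn_cond_exp M F (\<lambda>\<omega>. ennreal (V \<omega>)) \<omega> \<noteq> \<infinity>"
  proof (rule nn_integral_PInf_AE)
    have "(\<integral>\<^sup>+\<omega>. nn_cond_exp M F (\<lambda>\<omega>. ennreal (V \<omega>)) \<omega> \<partial>M) = (\<integral>\<^sup>+\<omega>. ennreal (V \<omega>) \<partial>M)"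
      using nn_cond_exp_intg[of "\<lambda>_. 1" "\<lambda>\<omega>. ennreal (V \<omega>)"] by simp
    then show "(\<integral>\<^sup>+\<omega>. nn_cond_exp M F (\<lambda>\<omega>. ennreal (V \<omega>)) \<omega> \<partial>M) \<noteq> \<infinity>"
      using V(1) by (simp add: integrable_iff_bounded V(2))
  qed simp
  \<comment> \<open>\<open>real_cond_exp\<close> subtracts the conditional expectation of the negative part, which is 0 here.\<close>
  moreover have "AE \<omega> in M. nn_cond_exp M F (\<lambda>\<omega>. ennreal (- V \<omega>)) \<omega> = 0"
    using nn_cond_exp_F_meas[of "\<lambda>_. 0"] V(2) by (simp add: ennreal_neg)
  ultimately show ?thesis
    using cond_exp unfolding real_cond_exp_def
  proof eventually_elim
    case (elim \<omega>)
    then show ?case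
      using ennreal_leI[of "enn2real (nn_cond_exp M F (\<lambda>\<omega>. ennreal (V \<omega>)) \<omega>)" c]
      by (simp add: ennreal_enn2real_if)
  qed
qed

lemma (in finite_measure) nn_integral_mult_le_if_real_cond_exp_le:
  fixes f :: "'b \<Rightarrow> ennreal"
  assumes Z: "Z \<in> measurable M N" and f: "f \<in> borel_measurable N"
    and V: "integrable M V" "\<And>\<omega>. 0 \<le> V \<omega>"
    and cond_exp: "AE \<omega> in M. real_cond_exp M (vimage_algebra (space M) Z N) V \<omega> \<le> c"
  shows "(\<integral>\<^sup>+\<omega>. ennreal (V \<omega>) * f (Z \<omega>) \<partial>M) \<le> ennreal c * (\<integral>\<^sup>+\<omega>. f (Z \<omega>) \<partial>M)"
proof -
  define F where "F = vimage_algebra (space M) Z N"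
  interpret sigma_finite_subalgebra M F
    unfolding F_def using sigma_finite_subalgebra_vimage_algebra[OF Z] .
  have [measurable]: "V \<in> borel_measurable M" "(\<lambda>\<omega>. f (Z \<omega>)) \<in> borel_measurable M"
    using V(1) Z f by auto
  have fZ: "(\<lambda>\<omega>. f (Z \<omega>)) \<in> borel_measurable F"
    unfolding F_def by (rule measurable_vimage_algebra_compose[OF Z f])
  have "(\<integral>\<^sup>+\<omega>. ennreal (V \<omega>) * f (Z \<omega>) \<partial>M)
      = (\<integral>\<^sup>+\<omega>. f (Z \<omega>) * nn_cond_exp M F (\<lambda>\<omega>. ennreal (V \<omega>)) \<omega> \<partial>M)"
    using nn_cond_exp_intg[OF fZ] by (simp add: mult.commute)
  also have "\<dots> \<le> (\<integral>\<^sup>+\<omega>. f (Z \<omega>) * ennreal c \<partial>M)"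
    using AE_nn_cond_exp_le_if_real_cond_exp_le[OF V cond_exp[folded F_def]]
    by (intro nn_integral_mono_AE) (auto intro: mult_left_mono elim!: eventually_mono)
  also have "\<dots> = ennreal c * (\<integral>\<^sup>+\<omega>. f (Z \<omega>) \<partial>M)"
    by (subst nn_integral_multc) (simp_all add: mult.commute)
  finally show ?thesis .
qed

section \<open>Independent blocks of an i.i.d.\ sequence\<close>

locale iid_sequence = prob_space M for M :: "'a measure" +
  fixes X :: "nat \<Rightarrow> 'a \<Rightarrow> 'x::topological_space"
  assumes measurable_X[measurable]: "\<And>i. X i \<in> borel_measurable M"
    and indep_vars_X: "indep_vars (\<lambda>_. borel) X UNIV"
    and distr_X: "\<And>i. distr M borel (X i) = distr M borel (X 0)"
begin

abbreviation law :: "'x measure" where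
  "law \<equiv> distr M borel (X 0)"

definition block :: "nat set \<Rightarrow> 'a \<Rightarrow> nat \<Rightarrow> 'x" where
  "block K \<omega> = restrict (\<lambda>k. X k \<omega>) K"

definition block_distr :: "nat set \<Rightarrow> (nat \<Rightarrow> 'x) measure" where
  "block_distr K = distr M (PiM K (\<lambda>_. borel)) (block K)"

lemma measurable_block[measurable]: "block K \<in> measurable M (PiM K (\<lambda>_. borel))"
  unfolding block_def by (intro measurable_restrict) simp

lemma prob_space_law: "prob_space law"
  by (rule prob_space_distr) simp

lemma prob_space_block_distr: "prob_space (block_distr K)"
  unfolding block_distr_def by (rule prob_space_distr) simp

lemma distr_block_X:
  assumes "i \<notin> K"
  shows "distr M (PiM K (\<lambda>_. borel) \<Otimes>\<^sub>M borel) (\<lambda>\<omega>. (block K \<omega>, X i \<omega>)) = block_distr K \<Otimes>\<^sub>M law"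
proof -
  have "indep_var (PiM K (\<lambda>_. borel)) (block K) (PiM {i} (\<lambda>_. borel)) (block {i})"
    unfolding block_def[abs_def] by (rule indep_var_restrict[OF indep_vars_X]) (use assms in auto)
  then have blocks: "distr M (PiM K (\<lambda>_. borel) \<Otimes>\<^sub>M PiM {i} (\<lambda>_. borel)) (\<lambda>\<omega>. (block K \<omega>, block {i} \<omega>))
      = block_distr K \<Otimes>\<^sub>M block_distr {i}"
    unfolding indep_var_distribution_eq block_distr_def by simp
  have [measurable]: "(\<lambda>f. f i) \<in> measurable (PiM {i} (\<lambda>_. borel)) (borel :: 'x measure)"
    by (rule measurable_component_singleton) simp
  have "block_distr K \<Otimes>\<^sub>M law
      = distr (block_distr K) (PiM K (\<lambda>_. borel)) (\<lambda>v. v) \<Otimes>\<^sub>M distr (block_distr {i}) borel (\<lambda>f. f i)"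
    by (simp add: distr_id2 block_distr_def distr_distr comp_def block_def distr_X[of i, symmetric])
  also have "\<dots> = distr (block_distr K \<Otimes>\<^sub>M block_distr {i}) (PiM K (\<lambda>_. borel) \<Otimes>\<^sub>M borel) (\<lambda>(v, f). (v, f i))"
    by (intro pair_measure_distr prob_space_imp_sigma_finite prob_space.prob_space_distr
        prob_space_block_distr) (auto simp: block_distr_def)
  also have "\<dots> = distr M (PiM K (\<lambda>_. borel) \<Otimes>\<^sub>M borel) (\<lambda>\<omega>. (block K \<omega>, X i \<omega>))"
    by (simp add: blocks[symmetric] distr_distr comp_def block_def)
  finally show ?thesis ..
qed

lemma nn_integral_block_X:
  assumes "i \<notin> K" and [measurable]: "G \<in> borel_measurable (PiM K (\<lambda>_. borel) \<Otimes>\<^sub>M borel)"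
  shows "(\<integral>\<^sup>+\<omega>. G (block K \<omega>, X i \<omega>) \<partial>M) = (\<integral>\<^sup>+v. \<integral>\<^sup>+x. G (v, x) \<partial>law \<partial>block_distr K)"
proof -
  interpret law: prob_space law by (rule prob_space_law)
  have "(\<integral>\<^sup>+\<omega>. G (block K \<omega>, X i \<omega>) \<partial>M) = integral\<^sup>N (block_distr K \<Otimes>\<^sub>M law) G"
    by (simp add: distr_block_X[OF assms(1), symmetric] nn_integral_distr)
  also have "\<dots> = (\<integral>\<^sup>+v. \<integral>\<^sup>+x. G (v, x) \<partial>law \<partial>block_distr K)"
    by (rule law.nn_integral_fst[symmetric]) (simp add: block_distr_def)
  finally show ?thesis .
qed

lemma integral_block_X:
  fixes G :: "(nat \<Rightarrow> 'x) \<times> 'x \<Rightarrow> real"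
  assumes "i \<notin> K" and [measurable]: "G \<in> borel_measurable (PiM K (\<lambda>_. borel) \<Otimes>\<^sub>M borel)"
    and integrable: "integrable M (\<lambda>\<omega>. G (block K \<omega>, X i \<omega>))"
  shows "AE v in block_distr K. integrable law (\<lambda>x. G (v, x))"
    and "(\<integral>\<omega>. G (block K \<omega>, X i \<omega>) \<partial>M) = (\<integral>v. \<integral>x. G (v, x) \<partial>law \<partial>block_distr K)"
proof -
  interpret pair_prob_space "block_distr K" law
    by (intro pair_prob_space.intro pair_sigma_finite.intro prob_space_law prob_space_block_distr
        prob_space_imp_sigma_finite)
  have "integrable (block_distr K \<Otimes>\<^sub>M law) G"
    using integrable by (simp add: distr_block_X[OF assms(1), symmetric] integrable_distr_eq)
  then show "AE v in block_distr K. integrable law (\<lambda>x. G (v, x))"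
    and "(\<integral>\<omega>. G (block K \<omega>, X i \<omega>) \<partial>M) = (\<integral>v. \<integral>x. G (v, x) \<partial>law \<partial>block_distr K)"
    by (simp_all add: AE_integrable_fst' integral_fst' distr_block_X[OF assms(1), symmetric] integral_distr)
qed

lemma nn_integral_X_eq_law:
  assumes [measurable]: "f \<in> borel_measurable borel"
  shows "(\<integral>\<^sup>+\<omega>. f (X i \<omega>) \<partial>M) = (\<integral>\<^sup>+x. f x \<partial>law)"
  by (simp add: distr_X[of i, symmetric] nn_integral_distr)

end

section \<open>Cross-fitted estimators\<close>

locale cross_fitting = iid_sequence M X
  for M :: "'a measure" and X :: "nat \<Rightarrow> 'a \<Rightarrow> 'x::topological_space" +
  fixes z :: "'x \<Rightarrow> 'z::topological_space"
  assumes measurable_z[measurable]: "z \<in> borel_measurable borel"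
begin

abbreviation instrument_law :: "'z measure" where
  "instrument_law \<equiv> distr M borel (\<lambda>\<omega>. z (X 0 \<omega>))"

definition fit_error ::
    "nat set \<Rightarrow> ((nat \<Rightarrow> 'x) \<Rightarrow> 'z \<Rightarrow> 'v::euclidean_space) \<Rightarrow> ('z \<Rightarrow> 'v) \<Rightarrow> nat \<Rightarrow> 'a \<Rightarrow> 'v"
  where "fit_error K g f i \<omega> = g (block K \<omega>) (z (X i \<omega>)) - f (z (X i \<omega>))"

definition mse :: "nat set \<Rightarrow> ((nat \<Rightarrow> 'x) \<Rightarrow> 'z \<Rightarrow> 'v::euclidean_space) \<Rightarrow> ('z \<Rightarrow> 'v) \<Rightarrow> ennreal"
  where "mse K g f = (\<integral>\<^sup>+\<omega>. \<integral>\<^sup>+\<zeta>. ennreal ((norm (g (block K \<omega>) \<zeta> - f \<zeta>))\<^sup>2) \<partial>instrument_law \<partial>M)"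

definition crossfit :: "(nat \<Rightarrow> nat set) \<Rightarrow> (nat \<Rightarrow> (nat \<Rightarrow> 'x) \<Rightarrow> 'z \<Rightarrow> 'v)
    \<Rightarrow> (nat \<Rightarrow> (nat \<Rightarrow> 'x) \<Rightarrow> 'z \<Rightarrow> 'v) \<Rightarrow> nat \<Rightarrow> nat \<Rightarrow> 'a \<Rightarrow> 'v"
  where "crossfit S1 g1 g2 n i \<omega> =
    (if i \<in> S1 n then g1 n (block ({..<2*n} - S1 n) \<omega>) (z (X i \<omega>)) else g2 n (block (S1 n) \<omega>) (z (X i \<omega>)))"

lemma crossfit_minus:
  "crossfit S1 g1 g2 n i \<omega> - f (z (X i \<omega>)) =
    (if i \<in> S1 n then fit_error ({..<2*n} - S1 n) (g1 n) f i \<omega> else fit_error (S1 n) (g2 n) f i \<omega>)"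
  by (simp add: crossfit_def fit_error_def)

context
  fixes K :: "nat set" and g :: "(nat \<Rightarrow> 'x) \<Rightarrow> 'z \<Rightarrow> 'v::euclidean_space" and f :: "'z \<Rightarrow> 'v"
  assumes measurable_g[measurable]: "case_prod g \<in> borel_measurable (PiM K (\<lambda>_. borel) \<Otimes>\<^sub>M borel)"
    and measurable_f[measurable]: "f \<in> borel_measurable borel"
begin

lemma measurable_fit_error[measurable]: "fit_error K g f i \<in> borel_measurable M"
  unfolding fit_error_def by measurable

lemma mse_eq_nn_integral_block_distr:
  "mse K g f = (\<integral>\<^sup>+v. \<integral>\<^sup>+x. ennreal ((norm (g v (z x) - f (z x)))\<^sup>2) \<partial>law \<partial>block_distr K)"
proof -
  interpret instrument_law: prob_space instrument_law
    by (rule prob_space_distr) simp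
  have "mse K g f = (\<integral>\<^sup>+v. \<integral>\<^sup>+\<zeta>. ennreal ((norm (g v \<zeta> - f \<zeta>))\<^sup>2) \<partial>instrument_law \<partial>block_distr K)"
    unfolding mse_def block_distr_def by (subst nn_integral_distr) measurable
  also have "\<dots> = (\<integral>\<^sup>+v. \<integral>\<^sup>+x. ennreal ((norm (g v (z x) - f (z x)))\<^sup>2) \<partial>law \<partial>block_distr K)"
  proof (rule nn_integral_cong)
    fix v assume "v \<in> space (block_distr K)"
    then have [measurable]: "v \<in> space (PiM K (\<lambda>_. borel))"
      by (simp add: block_distr_def)
    have "instrument_law = distr law borel z"
      by (simp add: distr_distr comp_def)
    then show "(\<integral>\<^sup>+\<zeta>. ennreal ((norm (g v \<zeta> - f \<zeta>))\<^sup>2) \<partial>instrument_law)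
        = (\<integral>\<^sup>+x. ennreal ((norm (g v (z x) - f (z x)))\<^sup>2) \<partial>law)"
      by (simp add: nn_integral_distr)
  qed
  finally show ?thesis .
qed

lemma nn_integral_sq_fit_error_eq_mse:
  assumes "i \<notin> K"
  shows "(\<integral>\<^sup>+\<omega>. ennreal ((norm (fit_error K g f i \<omega>))\<^sup>2) \<partial>M) = mse K g f"
  unfolding mse_eq_nn_integral_block_distr fit_error_def
  using nn_integral_block_X[OF assms, of "\<lambda>(v, x). ennreal ((norm (g v (z x) - f (z x)))\<^sup>2)"]
  by simp

lemma nn_integral_fit_error_mult_power2_le:
  fixes t :: "'x \<Rightarrow> 'w::real_normed_vector"
  assumes "i \<notin> K" and [measurable]: "t \<in> borel_measurable borel"
  shows "(\<integral>\<^sup>+\<omega>. ennreal (norm (fit_error K g f i \<omega>)) * ennreal (norm (t (X i \<omega>))) \<partial>M)\<^sup>2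
    \<le> mse K g f * (\<integral>\<^sup>+\<omega>. ennreal ((norm (t (X 0 \<omega>)))\<^sup>2) \<partial>M)"
proof -
  have "(\<integral>\<^sup>+\<omega>. ennreal (norm (fit_error K g f i \<omega>)) * ennreal (norm (t (X i \<omega>))) \<partial>M)\<^sup>2
      \<le> (\<integral>\<^sup>+\<omega>. ennreal (norm (fit_error K g f i \<omega>)) ^ 2 \<partial>M) * (\<integral>\<^sup>+\<omega>. ennreal (norm (t (X i \<omega>))) ^ 2 \<partial>M)"
    by (rule Cauchy_Schwarz_nn_integral) measurable
  moreover have "(\<integral>\<^sup>+\<omega>. ennreal (norm (fit_error K g f i \<omega>)) ^ 2 \<partial>M) = mse K g f"
    using nn_integral_sq_fit_error_eq_mse[OF assms(1)] by (simp add: ennreal_power)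
  moreover have "(\<integral>\<^sup>+\<omega>. ennreal (norm (t (X i \<omega>))) ^ 2 \<partial>M) = (\<integral>\<^sup>+\<omega>. ennreal ((norm (t (X 0 \<omega>)))\<^sup>2) \<partial>M)"
    using nn_integral_X_eq_law[of "\<lambda>x. ennreal ((norm (t x))\<^sup>2)" i]
      nn_integral_X_eq_law[of "\<lambda>x. ennreal ((norm (t x))\<^sup>2)" 0]
    by (simp add: ennreal_power)
  ultimately show ?thesis
    by simp
qed

end

context
  fixes S1 :: "nat \<Rightarrow> nat set" and g1 g2 :: "nat \<Rightarrow> (nat \<Rightarrow> 'x) \<Rightarrow> 'z \<Rightarrow> 'v::euclidean_space"
  assumes measurable_g1[measurable]:
      "\<And>n. case_prod (g1 n) \<in> borel_measurable (PiM ({..<2*n} - S1 n) (\<lambda>_. borel) \<Otimes>\<^sub>M borel)"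
    and measurable_g2[measurable]: "\<And>n. case_prod (g2 n) \<in> borel_measurable (PiM (S1 n) (\<lambda>_. borel) \<Otimes>\<^sub>M borel)"
begin

lemma measurable_crossfit[measurable]: "crossfit S1 g1 g2 n i \<in> borel_measurable M"
  unfolding crossfit_def by measurable

lemma nn_integral_crossfit_minus_mult_power2_le:
  fixes f :: "'z \<Rightarrow> 'v" and t :: "'x \<Rightarrow> 'w::real_normed_vector"
  assumes measurable_f[measurable]: "f \<in> borel_measurable borel" and [measurable]: "t \<in> borel_measurable borel"
  shows "(\<integral>\<^sup>+\<omega>. ennreal (norm (crossfit S1 g1 g2 n i \<omega> - f (z (X i \<omega>)))) * ennreal (norm (t (X i \<omega>))) \<partial>M)\<^sup>2
    \<le> (mse ({..<2*n} - S1 n) (g1 n) f + mse (S1 n) (g2 n) f) * (\<integral>\<^sup>+\<omega>. ennreal ((norm (t (X 0 \<omega>)))\<^sup>2) \<partial>M)"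
proof -
  let ?C = "\<integral>\<^sup>+\<omega>. ennreal ((norm (t (X 0 \<omega>)))\<^sup>2) \<partial>M"
  have "(\<integral>\<^sup>+\<omega>. ennreal (norm (crossfit S1 g1 g2 n i \<omega> - f (z (X i \<omega>)))) * ennreal (norm (t (X i \<omega>))) \<partial>M)\<^sup>2
      \<le> (if i \<in> S1 n then mse ({..<2*n} - S1 n) (g1 n) f else mse (S1 n) (g2 n) f) * ?C"
    unfolding crossfit_minus
    using nn_integral_fit_error_mult_power2_le[OF measurable_g1 measurable_f _ assms(2), of i n]
      nn_integral_fit_error_mult_power2_le[OF measurable_g2 measurable_f _ assms(2), of i n]
    by (cases "i \<in> S1 n") simp_all
  also have "\<dots> \<le> (mse ({..<2*n} - S1 n) (g1 n) f + mse (S1 n) (g2 n) f) * ?C"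
    by (intro mult_right_mono)
      (simp_all add: add_increasing2[OF zero_le order.refl] add_increasing[OF zero_le order.refl])
  finally show ?thesis .
qed

end

lemma outer_diff_left: "outer (a - b) t = outer a t - outer b t"
  unfolding outer_def by (simp add: vec_eq_iff left_diff_distrib)

lemma norm_outer: "norm (outer v t) = norm v * norm t"
proof -
  have row: "outer v t $ r = v $ r *\<^sub>R t" for r
    unfolding outer_def by (simp add: vec_eq_iff)
  have "norm (outer v t) = L2_set (\<lambda>r. norm (outer v t $ r)) UNIV"
    by (rule norm_vec_def)
  also have "\<dots> = L2_set (\<lambda>r. norm t * norm (v $ r)) UNIV"
    unfolding row by (simp add: mult.commute)
  also have "\<dots> = norm t * L2_set (\<lambda>r. norm (v $ r)) UNIV"
    by (rule L2_set_right_distrib[symmetric]) simp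
  also have "L2_set (\<lambda>r. norm (v $ r)) UNIV = norm v"
    by (rule norm_vec_def[symmetric])
  finally show ?thesis by (simp add: mult.commute)
qed

lemma borel_measurable_outer[measurable]:
  assumes "f \<in> borel_measurable N" "g \<in> borel_measurable N"
  shows "(\<lambda>x. outer (f x) (g x)) \<in> borel_measurable N"
proof -
  have "continuous_on UNIV (\<lambda>p. outer (fst p) (snd p))"
    unfolding outer_def by (intro continuous_on_vec_lambda continuous_intros)
  then show ?thesis by (rule borel_measurable_continuous_Pair[OF assms])
qed

context
  fixes S1 :: "nat \<Rightarrow> nat set" and g1 g2 :: "nat \<Rightarrow> (nat \<Rightarrow> 'x) \<Rightarrow> 'z \<Rightarrow> real^'k"
    and f :: "'z \<Rightarrow> real^'k" and t :: "'x \<Rightarrow> real^'t"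
  assumes g1: "\<And>n. case_prod (g1 n) \<in> borel_measurable (PiM ({..<2*n} - S1 n) (\<lambda>_. borel) \<Otimes>\<^sub>M borel)"
    and g2: "\<And>n. case_prod (g2 n) \<in> borel_measurable (PiM (S1 n) (\<lambda>_. borel) \<Otimes>\<^sub>M borel)"
    and f[measurable]: "f \<in> borel_measurable borel" and t[measurable]: "t \<in> borel_measurable borel"
    and integrable_t: "integrable M (\<lambda>\<omega>. (norm (t (X 0 \<omega>)))\<^sup>2)"
begin

lemma nn_integral_norm_crossfit_outer_le:
  assumes "0 < n" and mse_finite: "mse ({..<2*n} - S1 n) (g1 n) f + mse (S1 n) (g2 n) f \<noteq> \<infinity>"
  defines "e \<equiv> enn2real (mse ({..<2*n} - S1 n) (g1 n) f + mse (S1 n) (g2 n) f)"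
    and "C \<equiv> \<integral>\<omega>. (norm (t (X 0 \<omega>)))\<^sup>2 \<partial>M"
  shows "(\<integral>\<^sup>+\<omega>. ennreal (norm ((1 / real (2*n)) *\<^sub>R
      (\<Sum>i<2*n. outer (crossfit S1 g1 g2 n i \<omega> - f (z (X i \<omega>))) (t (X i \<omega>))))) \<partial>M) \<le> ennreal (sqrt (e * C))"
proof -
  define d where "d i \<omega> = crossfit S1 g1 g2 n i \<omega> - f (z (X i \<omega>))" for i \<omega>
  have [measurable]: "d i \<in> borel_measurable M" for i
    unfolding d_def using measurable_crossfit[OF g1 g2] by measurable
  have "(\<integral>\<^sup>+\<omega>. ennreal ((norm (t (X 0 \<omega>)))\<^sup>2) \<partial>M) = ennreal C"
    unfolding C_def by (rule nn_integral_eq_integral[OF integrable_t]) simp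
  moreover have "mse ({..<2*n} - S1 n) (g1 n) f + mse (S1 n) (g2 n) f = ennreal e"
    unfolding e_def using mse_finite by (intro ennreal_enn2real[symmetric]) (simp add: less_top)
  ultimately have summand: "(\<integral>\<^sup>+\<omega>. ennreal (norm (d i \<omega>)) * ennreal (norm (t (X i \<omega>))) \<partial>M) \<le> ennreal (sqrt (e * C))"
    for i
    using nn_integral_crossfit_minus_mult_power2_le[OF g1 g2 f t, of n i]
    unfolding d_def[symmetric]
    by (intro ennreal_le_sqrt_if_power2_le) (simp add: ennreal_mult' e_def)
  have "(\<integral>\<^sup>+\<omega>. ennreal (norm ((1 / real (2*n)) *\<^sub>R (\<Sum>i<2*n. outer (d i \<omega>) (t (X i \<omega>))))) \<partial>M)
      \<le> (\<integral>\<^sup>+\<omega>. ennreal (1 / real (2*n)) * (\<Sum>i<2*n. ennreal (norm (d i \<omega>)) * ennreal (norm (t (X i \<omega>)))) \<partial>M)"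
  proof (rule nn_integral_mono)
    fix \<omega>
    have "norm (\<Sum>i<2*n. outer (d i \<omega>) (t (X i \<omega>))) \<le> (\<Sum>i<2*n. norm (d i \<omega>) * norm (t (X i \<omega>)))"
      by (rule order.trans[OF norm_sum]) (simp add: norm_outer)
    then have "ennreal (norm ((1 / real (2*n)) *\<^sub>R (\<Sum>i<2*n. outer (d i \<omega>) (t (X i \<omega>)))))
        \<le> ennreal ((1 / real (2*n)) * (\<Sum>i<2*n. norm (d i \<omega>) * norm (t (X i \<omega>))))"
      by (intro ennreal_leI) (simp add: divide_right_mono)
    then show "ennreal (norm ((1 / real (2*n)) *\<^sub>R (\<Sum>i<2*n. outer (d i \<omega>) (t (X i \<omega>)))))
        \<le> ennreal (1 / real (2*n)) * (\<Sum>i<2*n. ennreal (norm (d i \<omega>)) * ennreal (norm (t (X i \<omega>))))"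
      by (simp add: ennreal_mult[symmetric] ennreal_mult'[symmetric] sum_ennreal)
  qed
  also have "\<dots> = ennreal (1 / real (2*n))
      * (\<integral>\<^sup>+\<omega>. (\<Sum>i<2*n. ennreal (norm (d i \<omega>)) * ennreal (norm (t (X i \<omega>)))) \<partial>M)"
    by (rule nn_integral_cmult) measurable
  also have "(\<integral>\<^sup>+\<omega>. (\<Sum>i<2*n. ennreal (norm (d i \<omega>)) * ennreal (norm (t (X i \<omega>)))) \<partial>M)
      = (\<Sum>i<2*n. \<integral>\<^sup>+\<omega>. ennreal (norm (d i \<omega>)) * ennreal (norm (t (X i \<omega>))) \<partial>M)"
    by (rule nn_integral_sum) measurable
  also have "ennreal (1 / real (2*n)) * \<dots> \<le> ennreal (1 / real (2*n)) * (\<Sum>i<2*n. ennreal (sqrt (e * C)))"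
    by (intro mult_left_mono sum_mono summand) simp
  also have "\<dots> = ennreal (sqrt (e * C))"
    using \<open>0 < n\<close> by (simp add: ennreal_of_nat_eq_real_of_nat mult.assoc[symmetric] ennreal_mult[symmetric])
  finally show ?thesis
    by (simp add: d_def)
qed

lemma op1_crossfit_outer:
  assumes mse1: "(\<lambda>n. mse ({..<2*n} - S1 n) (g1 n) f) \<longlonglongrightarrow> 0"
    and mse2: "(\<lambda>n. mse (S1 n) (g2 n) f) \<longlonglongrightarrow> 0"
  shows "op1 M (\<lambda>n \<omega>. (1 / real (2*n)) *\<^sub>R (\<Sum>i<2*n. outer (crossfit S1 g1 g2 n i \<omega>) (t (X i \<omega>)))
                   - (1 / real (2*n)) *\<^sub>R (\<Sum>i<2*n. outer (f (z (X i \<omega>))) (t (X i \<omega>))))"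
proof -
  define \<Delta> where "\<Delta> n \<omega> = (1 / real (2*n)) *\<^sub>R
    (\<Sum>i<2*n. outer (crossfit S1 g1 g2 n i \<omega> - f (z (X i \<omega>))) (t (X i \<omega>)))" for n \<omega>
  define e where "e n = enn2real (mse ({..<2*n} - S1 n) (g1 n) f + mse (S1 n) (g2 n) f)" for n
  define C where "C = (\<integral>\<omega>. (norm (t (X 0 \<omega>)))\<^sup>2 \<partial>M)"
  have mse_tendsto: "(\<lambda>n. mse ({..<2*n} - S1 n) (g1 n) f + mse (S1 n) (g2 n) f) \<longlonglongrightarrow> 0"
    using tendsto_add[OF mse1 mse2] by simp
  have "eventually (\<lambda>n. mse ({..<2*n} - S1 n) (g1 n) f + mse (S1 n) (g2 n) f < 1 \<and> 0 < n) sequentially"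
    using order_tendstoD(2)[OF mse_tendsto zero_less_one] eventually_gt_at_top[of 0]
    by (rule eventually_conj)
  then have bound: "eventually (\<lambda>n. (\<integral>\<^sup>+\<omega>. ennreal (norm (\<Delta> n \<omega>)) ^ 1 \<partial>M) \<le> ennreal (sqrt (e n * C))) sequentially"
  proof (rule eventually_mono)
    fix n assume small: "mse ({..<2*n} - S1 n) (g1 n) f + mse (S1 n) (g2 n) f < 1 \<and> 0 < n"
    then have "mse ({..<2*n} - S1 n) (g1 n) f + mse (S1 n) (g2 n) f \<noteq> \<infinity>"
      using order.strict_trans[of _ 1 \<infinity>] by auto
    with small show "(\<integral>\<^sup>+\<omega>. ennreal (norm (\<Delta> n \<omega>)) ^ 1 \<partial>M) \<le> ennreal (sqrt (e n * C))"
      unfolding \<Delta>_def e_def C_def using nn_integral_norm_crossfit_outer_le[of n] by simp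
  qed
  have "e \<longlonglongrightarrow> 0"
    unfolding e_def using tendsto_enn2real[OF mse_tendsto[folded ennreal_0]] by simp
  then have "(\<lambda>n. sqrt (e n * C)) \<longlonglongrightarrow> 0"
    using tendsto_real_sqrt[OF tendsto_mult_left_zero] by simp
  then have upper: "(\<lambda>n. ennreal (sqrt (e n * C))) \<longlonglongrightarrow> 0"
    using tendsto_ennrealI by fastforce
  have "op1 M \<Delta>"
  proof (rule op1_if_moment_tendsto_zero[where p=1])
    show "\<Delta> n \<in> borel_measurable M" for n
      unfolding \<Delta>_def using measurable_crossfit[OF g1 g2] by measurable
    show "(\<lambda>n. \<integral>\<^sup>+\<omega>. ennreal (norm (\<Delta> n \<omega>)) ^ 1 \<partial>M) \<longlonglongrightarrow> 0"
      by (rule tendsto_sandwich[OF _ bound tendsto_const upper]) simp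
  qed simp
  moreover have "(\<lambda>n \<omega>. (1 / real (2*n)) *\<^sub>R (\<Sum>i<2*n. outer (crossfit S1 g1 g2 n i \<omega>) (t (X i \<omega>)))
      - (1 / real (2*n)) *\<^sub>R (\<Sum>i<2*n. outer (f (z (X i \<omega>))) (t (X i \<omega>)))) = \<Delta>"
    by (simp add: fun_eq_iff \<Delta>_def outer_diff_left scaleR_diff_right sum_subtractf)
  ultimately show ?thesis
    by simp
qed

end

end

text \<open>The two assumptions on the residual \<open>u\<close> are the moment forms of
  \<open>E[u | z] = 0\<close> and \<open>E[u\<^sup>2 | z] \<le> Mb\<close>.\<close>

locale cross_fitting_residual = cross_fitting M X z
  for M :: "'a measure" and X :: "nat \<Rightarrow> 'a \<Rightarrow> 'x::topological_space" and z :: "'x \<Rightarrow> 'z::topological_space" +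
  fixes u :: "'x \<Rightarrow> real" and Mb :: real
  assumes measurable_u[measurable]: "u \<in> borel_measurable borel"
    and residual_orthogonal: "\<And>h. h \<in> borel_measurable borel \<Longrightarrow>
      integrable M (\<lambda>\<omega>. h (z (X 0 \<omega>)) * u (X 0 \<omega>)) \<Longrightarrow> (\<integral>\<omega>. h (z (X 0 \<omega>)) * u (X 0 \<omega>) \<partial>M) = 0"
    and residual_second_moment_le: "\<And>h. h \<in> borel_measurable borel \<Longrightarrow>
      (\<integral>\<^sup>+\<omega>. ennreal ((u (X 0 \<omega>))\<^sup>2) * h (z (X 0 \<omega>)) \<partial>M) \<le> ennreal Mb * (\<integral>\<^sup>+\<omega>. h (z (X 0 \<omega>)) \<partial>M)"
begin

lemma integral_law_residual_eq_0:
  assumes [measurable]: "h \<in> borel_measurable borel" and "integrable law (\<lambda>x. h (z x) * u x)"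
  shows "(\<integral>x. h (z x) * u x \<partial>law) = 0"
  using assms residual_orthogonal[of h] by (simp add: integrable_distr_eq integral_distr)

lemma nn_integral_law_residual_le:
  assumes [measurable]: "h \<in> borel_measurable borel"
  shows "(\<integral>\<^sup>+x. ennreal ((u x)\<^sup>2) * h (z x) \<partial>law) \<le> (\<integral>\<^sup>+x. ennreal Mb * h (z x) \<partial>law)"
  using residual_second_moment_le[OF assms] by (simp add: nn_integral_distr nn_integral_cmult)

context
  fixes K :: "nat set" and g :: "(nat \<Rightarrow> 'x) \<Rightarrow> 'z \<Rightarrow> 'v::euclidean_space" and f :: "'z \<Rightarrow> 'v"
  assumes measurable_g[measurable]: "case_prod g \<in> borel_measurable (PiM K (\<lambda>_. borel) \<Otimes>\<^sub>M borel)"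
    and measurable_f[measurable]: "f \<in> borel_measurable borel"
begin

lemma nn_integral_sq_norm_residual_fit_error_le:
  assumes "i \<notin> K"
  shows "(\<integral>\<^sup>+\<omega>. ennreal ((norm (u (X i \<omega>) *\<^sub>R fit_error K g f i \<omega>))\<^sup>2) \<partial>M) \<le> ennreal Mb * mse K g f"
proof -
  have "(\<integral>\<^sup>+\<omega>. ennreal ((norm (u (X i \<omega>) *\<^sub>R fit_error K g f i \<omega>))\<^sup>2) \<partial>M)
      = (\<integral>\<^sup>+v. \<integral>\<^sup>+x. ennreal ((u x)\<^sup>2) * ennreal ((norm (g v (z x) - f (z x)))\<^sup>2) \<partial>law \<partial>block_distr K)"
    using nn_integral_block_X[OF assms, of "\<lambda>(v, x). ennreal ((u x)\<^sup>2) * ennreal ((norm (g v (z x) - f (z x)))\<^sup>2)"]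
    by (simp add: fit_error_def power_mult_distrib ennreal_mult)
  also have "\<dots> \<le> (\<integral>\<^sup>+v. \<integral>\<^sup>+x. ennreal Mb * ennreal ((norm (g v (z x) - f (z x)))\<^sup>2) \<partial>law \<partial>block_distr K)"
  proof (rule nn_integral_mono)
    fix v assume "v \<in> space (block_distr K)"
    then have [measurable]: "v \<in> space (PiM K (\<lambda>_. borel))"
      by (simp add: block_distr_def)
    show "(\<integral>\<^sup>+x. ennreal ((u x)\<^sup>2) * ennreal ((norm (g v (z x) - f (z x)))\<^sup>2) \<partial>law)
        \<le> (\<integral>\<^sup>+x. ennreal Mb * ennreal ((norm (g v (z x) - f (z x)))\<^sup>2) \<partial>law)"
      by (rule nn_integral_law_residual_le[of "\<lambda>\<zeta>. ennreal ((norm (g v \<zeta> - f \<zeta>))\<^sup>2)"]) measurable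
  qed
  also have "\<dots> = (\<integral>\<^sup>+\<omega>. ennreal Mb * ennreal ((norm (fit_error K g f i \<omega>))\<^sup>2) \<partial>M)"
    using nn_integral_block_X[OF assms, of "\<lambda>(v, x). ennreal Mb * ennreal ((norm (g v (z x) - f (z x)))\<^sup>2)"]
    by (simp add: fit_error_def)
  also have "\<dots> = ennreal Mb * mse K g f"
    by (simp add: nn_integral_cmult nn_integral_sq_fit_error_eq_mse[OF measurable_g measurable_f assms])
  finally show ?thesis .
qed

lemma integrable_sq_norm_residual_fit_error:
  assumes "i \<notin> K" and "mse K g f \<noteq> \<infinity>"
  shows "integrable M (\<lambda>\<omega>. (norm (u (X i \<omega>) *\<^sub>R fit_error K g f i \<omega>))\<^sup>2)"
proof -
  have "(\<integral>\<^sup>+\<omega>. ennreal ((norm (u (X i \<omega>) *\<^sub>R fit_error K g f i \<omega>))\<^sup>2) \<partial>M) < \<infinity>"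
    using nn_integral_sq_norm_residual_fit_error_le[OF assms(1)] assms(2)
    by (auto simp: ennreal_mult_less_top less_top elim: order.strict_trans1)
  then show ?thesis
    by (intro integrableI_nonneg) (auto simp: measurable_fit_error[OF measurable_g measurable_f])
qed

lemma integrable_inner_residual_fit_error:
  assumes "i \<notin> K" "j \<notin> K" and "mse K g f \<noteq> \<infinity>"
  shows "integrable M (\<lambda>\<omega>. inner (u (X i \<omega>) *\<^sub>R fit_error K g f i \<omega>) (u (X j \<omega>) *\<^sub>R fit_error K g f j \<omega>))"
proof -
  let ?a = "\<lambda>i \<omega>. u (X i \<omega>) *\<^sub>R fit_error K g f i \<omega>"
  have [measurable]: "?a i \<in> borel_measurable M" for i
    using measurable_fit_error[OF measurable_g measurable_f] by measurable
  show ?thesis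
  proof (rule Bochner_Integration.integrable_bound)
    show "integrable M (\<lambda>\<omega>. (norm (?a i \<omega>))\<^sup>2 + (norm (?a j \<omega>))\<^sup>2)"
      using integrable_sq_norm_residual_fit_error assms by auto
    show "AE \<omega> in M. norm (inner (?a i \<omega>) (?a j \<omega>)) \<le> norm ((norm (?a i \<omega>))\<^sup>2 + (norm (?a j \<omega>))\<^sup>2)"
    proof (rule AE_I2)
      fix \<omega>
      have "\<bar>inner (?a i \<omega>) (?a j \<omega>)\<bar> \<le> norm (?a i \<omega>) * norm (?a j \<omega>)"
        by (rule Cauchy_Schwarz_ineq2)
      also have "\<dots> \<le> (norm (?a i \<omega>))\<^sup>2 + (norm (?a j \<omega>))\<^sup>2"
        using sum_squares_bound[of "norm (?a i \<omega>)" "norm (?a j \<omega>)"]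
          mult_nonneg_nonneg[OF norm_ge_zero norm_ge_zero, of "?a i \<omega>" "?a j \<omega>"] by linarith
      finally show "norm (inner (?a i \<omega>) (?a j \<omega>)) \<le> norm ((norm (?a i \<omega>))\<^sup>2 + (norm (?a j \<omega>))\<^sup>2)"
        by simp
    qed
  qed measurable
qed

lemma integral_inner_residual_fit_error_eq_0:
  assumes "i \<notin> K" "j \<notin> K" "i \<noteq> j" and "mse K g f \<noteq> \<infinity>"
  shows "(\<integral>\<omega>. inner (u (X i \<omega>) *\<^sub>R fit_error K g f i \<omega>) (u (X j \<omega>) *\<^sub>R fit_error K g f j \<omega>) \<partial>M) = 0"
proof -
  let ?a = "\<lambda>i \<omega>. u (X i \<omega>) *\<^sub>R fit_error K g f i \<omega>"
  note integrable = integrable_inner_residual_fit_error[OF assms(1,2,4)]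
  \<comment> \<open>Given the fit and observation \<open>j\<close>, the integrand is \<open>u(X\<^sub>i)\<close> times a function of \<open>z(X\<^sub>i)\<close>.\<close>
  define K' where "K' = insert j K"
  have "i \<notin> K'" using assms by (simp add: K'_def)
  have [measurable]: "(\<lambda>v. restrict v K) \<in> measurable (PiM K' (\<lambda>_. borel)) (PiM K (\<lambda>_. borel :: 'x measure))"
    by (rule measurable_restrict_subset) (auto simp: K'_def)
  have [measurable]: "(\<lambda>v. v j) \<in> measurable (PiM K' (\<lambda>_. borel)) (borel :: 'x measure)"
    by (rule measurable_component_singleton) (simp add: K'_def)
  define c where "c v = u (v j) *\<^sub>R (g (restrict v K) (z (v j)) - f (z (v j)))" for v
  define G where "G = (\<lambda>(v, x). inner (g (restrict v K) (z x) - f (z x)) (c v) * u x)"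
  have G_measurable[measurable]: "G \<in> borel_measurable (PiM K' (\<lambda>_. borel) \<Otimes>\<^sub>M borel)"
    unfolding G_def c_def by measurable
  have G_block: "G (block K' \<omega>, X i \<omega>) = inner (?a i \<omega>) (?a j \<omega>)" for \<omega>
  proof -
    have "restrict (block K' \<omega>) K = block K \<omega>" "block K' \<omega> j = X j \<omega>"
      by (auto simp: block_def K'_def)
    then show ?thesis by (simp add: G_def c_def fit_error_def)
  qed
  note Fubini = integral_block_X[OF \<open>i \<notin> K'\<close> G_measurable, unfolded G_block, OF integrable]
  have "AE v in block_distr K'. (\<integral>x. G (v, x) \<partial>law) = 0"
    using Fubini(1) AE_space
  proof eventually_elim
    case (elim v)
    then have [measurable]: "v \<in> space (PiM K' (\<lambda>_. borel))"
      by (simp add: block_distr_def)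
    show ?case
      using elim(1) integral_law_residual_eq_0[of "\<lambda>\<zeta>. inner (g (restrict v K) \<zeta> - f \<zeta>) (c v)"]
      by (simp add: G_def)
  qed
  then show ?thesis
    unfolding Fubini(2) by (rule integral_eq_zero_AE)
qed

lemma integral_sq_norm_sum_residual_fit_error:
  assumes "finite S" "S \<inter> K = {}" and "mse K g f \<noteq> \<infinity>"
  shows "integrable M (\<lambda>\<omega>. (norm (\<Sum>i\<in>S. u (X i \<omega>) *\<^sub>R fit_error K g f i \<omega>))\<^sup>2)"
    and "(\<integral>\<omega>. (norm (\<Sum>i\<in>S. u (X i \<omega>) *\<^sub>R fit_error K g f i \<omega>))\<^sup>2 \<partial>M)
      = (\<Sum>i\<in>S. \<integral>\<omega>. (norm (u (X i \<omega>) *\<^sub>R fit_error K g f i \<omega>))\<^sup>2 \<partial>M)"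
proof -
  let ?a = "\<lambda>i \<omega>. u (X i \<omega>) *\<^sub>R fit_error K g f i \<omega>"
  have not_in_K: "i \<in> S \<Longrightarrow> i \<notin> K" for i
    using assms(2) by auto
  have integrable_inner: "integrable M (\<lambda>\<omega>. inner (?a i \<omega>) (?a j \<omega>))" if "i \<in> S" "j \<in> S" for i j
    using integrable_inner_residual_fit_error[OF not_in_K[OF that(1)] not_in_K[OF that(2)] assms(3)] .
  have sq_eq: "(norm (\<Sum>i\<in>S. ?a i \<omega>))\<^sup>2 = (\<Sum>i\<in>S. \<Sum>j\<in>S. inner (?a i \<omega>) (?a j \<omega>))" for \<omega>
    by (subst sum.swap) (simp only: power2_norm_eq_inner inner_sum_left inner_sum_right)
  show "integrable M (\<lambda>\<omega>. (norm (\<Sum>i\<in>S. ?a i \<omega>))\<^sup>2)"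
    unfolding sq_eq by (intro Bochner_Integration.integrable_sum integrable_inner)
  have "(\<integral>\<omega>. (norm (\<Sum>i\<in>S. ?a i \<omega>))\<^sup>2 \<partial>M) = (\<Sum>i\<in>S. \<integral>\<omega>. (\<Sum>j\<in>S. inner (?a i \<omega>) (?a j \<omega>)) \<partial>M)"
    unfolding sq_eq by (intro Bochner_Integration.integral_sum Bochner_Integration.integrable_sum integrable_inner)
  also have "\<dots> = (\<Sum>i\<in>S. \<Sum>j\<in>S. \<integral>\<omega>. inner (?a i \<omega>) (?a j \<omega>) \<partial>M)"
    by (intro sum.cong refl Bochner_Integration.integral_sum integrable_inner)
  also have "\<dots> = (\<Sum>i\<in>S. \<Sum>j\<in>S. if j = i then \<integral>\<omega>. inner (?a i \<omega>) (?a i \<omega>) \<partial>M else 0)"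
  proof (intro sum.cong refl)
    fix i j assume "i \<in> S" "j \<in> S"
    show "(\<integral>\<omega>. inner (?a i \<omega>) (?a j \<omega>) \<partial>M) = (if j = i then \<integral>\<omega>. inner (?a i \<omega>) (?a i \<omega>) \<partial>M else 0)"
    proof (cases "j = i")
      case False
      then have "i \<noteq> j" by simp
      from integral_inner_residual_fit_error_eq_0[OF not_in_K[OF \<open>i \<in> S\<close>] not_in_K[OF \<open>j \<in> S\<close>] this assms(3)]
        False show ?thesis by (simp only: if_False)
    qed simp
  qed
  also have "\<dots> = (\<Sum>i\<in>S. \<integral>\<omega>. (norm (?a i \<omega>))\<^sup>2 \<partial>M)"
    by (intro sum.cong refl) (simp only: sum.delta[OF assms(1)] if_True power2_norm_eq_inner)
  finally show "(\<integral>\<omega>. (norm (\<Sum>i\<in>S. ?a i \<omega>))\<^sup>2 \<partial>M) = (\<Sum>i\<in>S. \<integral>\<omega>. (norm (?a i \<omega>))\<^sup>2 \<partial>M)" .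
qed

lemma nn_integral_sq_norm_sum_residual_fit_error_le:
  assumes "finite S" "S \<inter> K = {}" and "mse K g f \<noteq> \<infinity>"
  shows "(\<integral>\<^sup>+\<omega>. ennreal ((norm (\<Sum>i\<in>S. u (X i \<omega>) *\<^sub>R fit_error K g f i \<omega>))\<^sup>2) \<partial>M)
    \<le> of_nat (card S) * (ennreal Mb * mse K g f)"
proof -
  let ?a = "\<lambda>i \<omega>. u (X i \<omega>) *\<^sub>R fit_error K g f i \<omega>"
  have not_in_K: "i \<in> S \<Longrightarrow> i \<notin> K" for i
    using assms(2) by auto
  note sum = integral_sq_norm_sum_residual_fit_error[OF assms]
  have "(\<integral>\<^sup>+\<omega>. ennreal ((norm (\<Sum>i\<in>S. ?a i \<omega>))\<^sup>2) \<partial>M) = ennreal (\<Sum>i\<in>S. \<integral>\<omega>. (norm (?a i \<omega>))\<^sup>2 \<partial>M)"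
    by (simp add: nn_integral_eq_integral[OF sum(1)] sum(2))
  also have "\<dots> = (\<Sum>i\<in>S. ennreal (\<integral>\<omega>. (norm (?a i \<omega>))\<^sup>2 \<partial>M))"
    by (rule sum_ennreal[symmetric]) simp
  also have "\<dots> = (\<Sum>i\<in>S. \<integral>\<^sup>+\<omega>. ennreal ((norm (?a i \<omega>))\<^sup>2) \<partial>M)"
    using integrable_sq_norm_residual_fit_error[OF not_in_K assms(3)]
    by (intro sum.cong refl nn_integral_eq_integral[symmetric]) auto
  also have "\<dots> \<le> (\<Sum>i\<in>S. ennreal Mb * mse K g f)"
    by (intro sum_mono nn_integral_sq_norm_residual_fit_error_le not_in_K)
  finally show ?thesis
    by simp
qed

end

context
  fixes S1 :: "nat \<Rightarrow> nat set" and g1 g2 :: "nat \<Rightarrow> (nat \<Rightarrow> 'x) \<Rightarrow> 'z \<Rightarrow> 'v::euclidean_space"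
    and f :: "'z \<Rightarrow> 'v"
  assumes S1_subset: "\<And>n. S1 n \<subseteq> {..<2*n}" and card_S1: "\<And>n. card (S1 n) = n"
    and g1: "\<And>n. case_prod (g1 n) \<in> borel_measurable (PiM ({..<2*n} - S1 n) (\<lambda>_. borel) \<Otimes>\<^sub>M borel)"
    and g2: "\<And>n. case_prod (g2 n) \<in> borel_measurable (PiM (S1 n) (\<lambda>_. borel) \<Otimes>\<^sub>M borel)"
    and f[measurable]: "f \<in> borel_measurable borel"
begin

lemma nn_integral_sq_norm_crossfit_score_le:
  assumes "0 < n" and finite1: "mse ({..<2*n} - S1 n) (g1 n) f \<noteq> \<infinity>"
    and finite2: "mse (S1 n) (g2 n) f \<noteq> \<infinity>"
  shows "(\<integral>\<^sup>+\<omega>. ennreal (norm ((1 / sqrt (real (2*n))) *\<^sub>R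
      (\<Sum>i<2*n. u (X i \<omega>) *\<^sub>R (crossfit S1 g1 g2 n i \<omega> - f (z (X i \<omega>)))))) ^ 2 \<partial>M)
    \<le> ennreal Mb * (mse ({..<2*n} - S1 n) (g1 n) f + mse (S1 n) (g2 n) f)"
proof -
  define S2 where "S2 = {..<2*n} - S1 n"
  define s1 where "s1 \<omega> = (\<Sum>i\<in>S1 n. u (X i \<omega>) *\<^sub>R fit_error S2 (g1 n) f i \<omega>)" for \<omega>
  define s2 where "s2 \<omega> = (\<Sum>i\<in>S2. u (X i \<omega>) *\<^sub>R fit_error (S1 n) (g2 n) f i \<omega>)" for \<omega>
  have finite_S1: "finite (S1 n)"
    using S1_subset by (rule finite_subset) simp
  have [measurable]: "s1 \<in> borel_measurable M" "s2 \<in> borel_measurable M"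
    unfolding s1_def s2_def S2_def
    using measurable_fit_error[OF g1 f] measurable_fit_error[OF g2 f] by measurable
  have sum_eq: "(\<Sum>i<2*n. u (X i \<omega>) *\<^sub>R (crossfit S1 g1 g2 n i \<omega> - f (z (X i \<omega>)))) = s1 \<omega> + s2 \<omega>" for \<omega>
  proof -
    have "(\<Sum>i<2*n. u (X i \<omega>) *\<^sub>R (crossfit S1 g1 g2 n i \<omega> - f (z (X i \<omega>))))
        = (\<Sum>i\<in>S2. u (X i \<omega>) *\<^sub>R (crossfit S1 g1 g2 n i \<omega> - f (z (X i \<omega>))))
          + (\<Sum>i\<in>S1 n. u (X i \<omega>) *\<^sub>R (crossfit S1 g1 g2 n i \<omega> - f (z (X i \<omega>))))"
      unfolding S2_def by (rule sum.subset_diff[OF S1_subset]) simp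
    then show ?thesis
      by (simp add: s1_def s2_def S2_def crossfit_minus)
  qed
  have "(\<integral>\<^sup>+\<omega>. ennreal (norm ((1 / sqrt (real (2*n))) *\<^sub>R (s1 \<omega> + s2 \<omega>))) ^ 2 \<partial>M)
      \<le> (\<integral>\<^sup>+\<omega>. ennreal (1 / real n) * ennreal ((norm (s1 \<omega>))\<^sup>2)
              + ennreal (1 / real n) * ennreal ((norm (s2 \<omega>))\<^sup>2) \<partial>M)"
  proof (rule nn_integral_mono)
    fix \<omega>
    from power2_norm_scaleR_add_le[of "real n" "s1 \<omega>" "s2 \<omega>"] \<open>0 < n\<close>
    show "ennreal (norm ((1 / sqrt (real (2*n))) *\<^sub>R (s1 \<omega> + s2 \<omega>))) ^ 2
        \<le> ennreal (1 / real n) * ennreal ((norm (s1 \<omega>))\<^sup>2) + ennreal (1 / real n) * ennreal ((norm (s2 \<omega>))\<^sup>2)"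
      by (simp add: ennreal_power ennreal_mult[symmetric] ennreal_plus[symmetric] del: ennreal_plus ennreal_leI)
  qed
  also have "\<dots> = ennreal (1 / real n) * (\<integral>\<^sup>+\<omega>. ennreal ((norm (s1 \<omega>))\<^sup>2) \<partial>M)
      + ennreal (1 / real n) * (\<integral>\<^sup>+\<omega>. ennreal ((norm (s2 \<omega>))\<^sup>2) \<partial>M)"
    by (simp add: nn_integral_add nn_integral_cmult)
  also have "\<dots> \<le> ennreal (1 / real n) * (of_nat n * (ennreal Mb * mse S2 (g1 n) f))
      + ennreal (1 / real n) * (of_nat n * (ennreal Mb * mse (S1 n) (g2 n) f))"
    unfolding s1_def s2_def S2_def
    using nn_integral_sq_norm_sum_residual_fit_error_le[OF g1 f finite_S1 _ finite1]
      nn_integral_sq_norm_sum_residual_fit_error_le[OF g2 f _ _ finite2, of "{..<2*n} - S1 n"]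
      card_S1[of n] S1_subset[of n] finite_S1
    by (intro add_mono mult_left_mono) (auto simp: card_Diff_subset)
  also have "\<dots> = ennreal Mb * (mse S2 (g1 n) f + mse (S1 n) (g2 n) f)"
    using \<open>0 < n\<close>
    by (simp add: mult.assoc[symmetric] ennreal_of_nat_eq_real_of_nat ennreal_mult[symmetric] distrib_left)
  finally show ?thesis
    by (simp add: sum_eq S2_def)
qed

lemma op1_crossfit_score:
  assumes mse1: "(\<lambda>n. mse ({..<2*n} - S1 n) (g1 n) f) \<longlonglongrightarrow> 0"
    and mse2: "(\<lambda>n. mse (S1 n) (g2 n) f) \<longlonglongrightarrow> 0"
  shows "op1 M (\<lambda>n \<omega>. (1 / sqrt (real (2*n))) *\<^sub>R (\<Sum>i<2*n. u (X i \<omega>) *\<^sub>R crossfit S1 g1 g2 n i \<omega>)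
                   - (1 / sqrt (real (2*n))) *\<^sub>R (\<Sum>i<2*n. u (X i \<omega>) *\<^sub>R f (z (X i \<omega>))))"
proof -
  define \<Delta> where "\<Delta> n \<omega> = (1 / sqrt (real (2*n))) *\<^sub>R
    (\<Sum>i<2*n. u (X i \<omega>) *\<^sub>R (crossfit S1 g1 g2 n i \<omega> - f (z (X i \<omega>))))" for n \<omega>
  have "eventually (\<lambda>n. mse ({..<2*n} - S1 n) (g1 n) f < 1 \<and> mse (S1 n) (g2 n) f < 1 \<and> 0 < n) sequentially"
    using order_tendstoD(2)[OF mse1 zero_less_one] order_tendstoD(2)[OF mse2 zero_less_one]
      eventually_gt_at_top[of 0]
    by (intro eventually_conj)
  then have bound: "eventually (\<lambda>n. (\<integral>\<^sup>+\<omega>. ennreal (norm (\<Delta> n \<omega>)) ^ 2 \<partial>M)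
      \<le> ennreal Mb * (mse ({..<2*n} - S1 n) (g1 n) f + mse (S1 n) (g2 n) f)) sequentially"
  proof (rule eventually_mono)
    fix n assume "mse ({..<2*n} - S1 n) (g1 n) f < 1 \<and> mse (S1 n) (g2 n) f < 1 \<and> 0 < n"
    then show "(\<integral>\<^sup>+\<omega>. ennreal (norm (\<Delta> n \<omega>)) ^ 2 \<partial>M)
        \<le> ennreal Mb * (mse ({..<2*n} - S1 n) (g1 n) f + mse (S1 n) (g2 n) f)"
      unfolding \<Delta>_def by (intro nn_integral_sq_norm_crossfit_score_le) auto
  qed
  have upper: "(\<lambda>n. ennreal Mb * (mse ({..<2*n} - S1 n) (g1 n) f + mse (S1 n) (g2 n) f)) \<longlonglongrightarrow> 0"
    using ennreal_tendsto_cmult[OF _ tendsto_add[OF mse1 mse2], of "ennreal Mb"] by simp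
  have "op1 M \<Delta>"
  proof (rule op1_if_moment_tendsto_zero[where p=2])
    show "\<Delta> n \<in> borel_measurable M" for n
      unfolding \<Delta>_def using measurable_crossfit[OF g1 g2] by measurable
    show "(\<lambda>n. \<integral>\<^sup>+\<omega>. ennreal (norm (\<Delta> n \<omega>)) ^ 2 \<partial>M) \<longlonglongrightarrow> 0"
      by (rule tendsto_sandwich[OF _ bound tendsto_const upper]) simp
  qed simp
  moreover have "(\<lambda>n \<omega>. (1 / sqrt (real (2*n))) *\<^sub>R (\<Sum>i<2*n. u (X i \<omega>) *\<^sub>R crossfit S1 g1 g2 n i \<omega>)
      - (1 / sqrt (real (2*n))) *\<^sub>R (\<Sum>i<2*n. u (X i \<omega>) *\<^sub>R f (z (X i \<omega>)))) = \<Delta>"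
    by (simp add: fun_eq_iff \<Delta>_def scaleR_diff_right sum_subtractf)
  ultimately show ?thesis
    by simp
qed

end

end

section \<open>The instrumental variable model\<close>

lemma continuous_on_aug: "continuous_on UNIV aug"
  unfolding aug_def
proof (intro continuous_on_vec_lambda)
  show "continuous_on UNIV (\<lambda>x. case i of None \<Rightarrow> 1 | Some j \<Rightarrow> x $ j)" for i :: "'a option"
    by (cases i) (auto intro!: continuous_intros)
qed

lemma measurable_aug[measurable]: "aug \<in> borel_measurable borel"
  using continuous_on_aug by (rule borel_measurable_continuous_onI)

definition iv_regressors :: "real \<times> (real^'d) \<times> (real^'w) \<Rightarrow> real^('d option)" where
  "iv_regressors x = aug (fst (snd x))"

definition iv_instrument :: "real \<times> (real^'d) \<times> (real^'w) \<Rightarrow> real^('w option)" where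
  "iv_instrument x = aug (snd (snd x))"

definition iv_residual :: "real^('d option) \<Rightarrow> real \<times> (real^'d) \<times> (real^'w) \<Rightarrow> real" where
  "iv_residual \<theta> x = fst x - iv_regressors x \<bullet> \<theta>"

lemma
  shows measurable_iv_regressors[measurable]: "iv_regressors \<in> borel_measurable borel"
    and measurable_iv_instrument[measurable]: "iv_instrument \<in> borel_measurable borel"
    and measurable_iv_residual[measurable]: "iv_residual \<theta> \<in> borel_measurable borel"
  unfolding iv_regressors_def iv_instrument_def iv_residual_def
  by (auto intro!: borel_measurable_continuous_onI continuous_intros continuous_on_compose2[OF continuous_on_aug])

lemma cross_fitting_residual_iv:
  fixes X :: "nat \<Rightarrow> 'a \<Rightarrow> real \<times> (real^'d) \<times> (real^'w)"
  assumes "iid_sequence M X"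
    and mean: "AE \<omega> in M. real_cond_exp M (vimage_algebra (space M) (\<lambda>\<omega>. snd (snd (X 0 \<omega>))) borel)
      (\<lambda>\<omega>. iv_residual \<theta> (X 0 \<omega>)) \<omega> = 0"
    and integrable: "integrable M (\<lambda>\<omega>. (iv_residual \<theta> (X 0 \<omega>))\<^sup>2)"
    and variance: "AE \<omega> in M. real_cond_exp M (vimage_algebra (space M) (\<lambda>\<omega>. iv_instrument (X 0 \<omega>)) borel)
      (\<lambda>\<omega>. (iv_residual \<theta> (X 0 \<omega>))\<^sup>2) \<omega> \<le> Mb"
  shows "cross_fitting_residual M X iv_instrument (iv_residual \<theta>) Mb"
proof -
  interpret iid_sequence M X by fact
  have "(\<lambda>x::real \<times> (real^'d) \<times> (real^'w). snd (snd x)) \<in> borel_measurable borel"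
    by (intro borel_measurable_continuous_onI continuous_intros)
  from measurable_compose[OF measurable_X this]
  have [measurable]: "(\<lambda>\<omega>. snd (snd (X 0 \<omega>))) \<in> borel_measurable M" .
  show ?thesis
  proof unfold_locales
    show "(\<integral>\<omega>. h (iv_instrument (X 0 \<omega>)) * iv_residual \<theta> (X 0 \<omega>) \<partial>M) = 0"
      if [measurable]: "h \<in> borel_measurable borel"
        and "integrable M (\<lambda>\<omega>. h (iv_instrument (X 0 \<omega>)) * iv_residual \<theta> (X 0 \<omega>))" for h
    proof -
      have "(\<lambda>w. h (aug w)) \<in> borel_measurable borel" "(\<lambda>\<omega>. iv_residual \<theta> (X 0 \<omega>)) \<in> borel_measurable M"
        by measurable
      with that(2) show ?thesis
        using integral_mult_eq_0_if_real_cond_exp_eq_0[OF _ _ _ _ mean, of "\<lambda>w. h (aug w)"]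
        by (simp add: iv_instrument_def)
    qed
    show "(\<integral>\<^sup>+\<omega>. ennreal ((iv_residual \<theta> (X 0 \<omega>))\<^sup>2) * h (iv_instrument (X 0 \<omega>)) \<partial>M)
        \<le> ennreal Mb * (\<integral>\<^sup>+\<omega>. h (iv_instrument (X 0 \<omega>)) \<partial>M)"
      if [measurable]: "h \<in> borel_measurable borel" for h
      by (rule nn_integral_mult_le_if_real_cond_exp_le[OF _ that integrable _ variance]) simp_all
  qed simp_all
qed

theorem lemma1:
  fixes M :: "'a measure"
    and Y :: "nat \<Rightarrow> 'a \<Rightarrow> real"
    and D :: "nat \<Rightarrow> 'a \<Rightarrow> real^'d"
    and W :: "nat \<Rightarrow> 'a \<Rightarrow> real^'w"
    and \<theta> :: "real^('d option)"
    and S1 :: "nat \<Rightarrow> nat set"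
    and g1 g2 :: "nat \<Rightarrow> (nat \<Rightarrow> real \<times> (real^'d) \<times> (real^'w)) \<Rightarrow> real^('w option) \<Rightarrow> real^'k"
    and Ups :: "real^('w option) \<Rightarrow> real^'k"
    and \<epsilon> Mb :: real
  defines "X \<equiv> \<lambda>i \<omega>. (Y i \<omega>, D i \<omega>, W i \<omega>)"
    and "T \<equiv> \<lambda>i \<omega>. aug (D i \<omega>)"
    and "Z \<equiv> \<lambda>i \<omega>. aug (W i \<omega>)"
    and "U \<equiv> \<lambda>i \<omega>. Y i \<omega> - aug (D i \<omega>) \<bullet> \<theta>"
    and "S2 \<equiv> \<lambda>n. {..<2*n} - S1 n"
    and "Uh1 \<equiv> \<lambda>n \<omega> z. g1 n (restrict (\<lambda>i. (Y i \<omega>, D i \<omega>, W i \<omega>)) ({..<2*n} - S1 n)) z"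
    and "Uh2 \<equiv> \<lambda>n \<omega> z. g2 n (restrict (\<lambda>i. (Y i \<omega>, D i \<omega>, W i \<omega>)) (S1 n)) z"
    and "Uh \<equiv> \<lambda>n i \<omega>. if i \<in> S1 n
           then g1 n (restrict (\<lambda>i. (Y i \<omega>, D i \<omega>, W i \<omega>)) ({..<2*n} - S1 n)) (aug (W i \<omega>))
           else g2 n (restrict (\<lambda>i. (Y i \<omega>, D i \<omega>, W i \<omega>)) (S1 n)) (aug (W i \<omega>))"
    and "PZ \<equiv> distr M borel (\<lambda>\<omega>. aug (W 0 \<omega>))"
  assumes "prob_space M"
    and "\<forall>i. X i \<in> borel_measurable M"
    and "prob_space.indep_vars M (\<lambda>_. borel) X UNIV"
    and "\<forall>i. distr M borel (X i) = distr M borel (X 0)"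
    and "AE \<omega> in M. real_cond_exp M (vimage_algebra (space M) (W 0) borel) (U 0) \<omega> = 0"
    and "\<forall>n. S1 n \<subseteq> {..<2*n} \<and> card (S1 n) = n"
    and "\<forall>n. (\<lambda>(x, z). g1 n x z) \<in> borel_measurable (PiM (S2 n) (\<lambda>_. borel) \<Otimes>\<^sub>M borel)"
    and "\<forall>n. (\<lambda>(x, z). g2 n x z) \<in> borel_measurable (PiM (S1 n) (\<lambda>_. borel) \<Otimes>\<^sub>M borel)"
    and "Ups \<in> borel_measurable borel"
    and "(\<lambda>n. \<integral>\<^sup>+\<omega>. (\<integral>\<^sup>+z. ennreal ((norm (Uh1 n \<omega> z - Ups z))^2) \<partial>PZ) \<partial>M) \<longlonglongrightarrow> 0"
    and "(\<lambda>n. \<integral>\<^sup>+\<omega>. (\<integral>\<^sup>+z. ennreal ((norm (Uh2 n \<omega> z - Ups z))^2) \<partial>PZ) \<partial>M) \<longlonglongrightarrow> 0"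
    and "\<epsilon> > 0"
    and "integrable M (\<lambda>\<omega>. \<bar>U 0 \<omega>\<bar> powr (2 + \<epsilon>))"
    and "integrable M (\<lambda>\<omega>. norm (U 0 \<omega> *\<^sub>R Ups (Z 0 \<omega>)) powr (2 + \<epsilon>))"
    and "integrable M (\<lambda>\<omega>. (norm (T 0 \<omega>))^2)"
    and "integrable M (\<lambda>\<omega>. (U 0 \<omega>)^2 *\<^sub>R outer (Ups (Z 0 \<omega>)) (Ups (Z 0 \<omega>)))"
    and "AE \<omega> in M. real_cond_exp M (vimage_algebra (space M) (Z 0) borel) (\<lambda>\<omega>. (U 0 \<omega>)^2) \<omega> < Mb"
  shows "op1 M (\<lambda>n \<omega>. (1 / real (2*n)) *\<^sub>R (\<Sum>i<2*n. outer (Uh n i \<omega>) (T i \<omega>))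
                     - (1 / real (2*n)) *\<^sub>R (\<Sum>i<2*n. outer (Ups (Z i \<omega>)) (T i \<omega>)))
       \<and> op1 M (\<lambda>n \<omega>. (1 / sqrt (real (2*n))) *\<^sub>R (\<Sum>i<2*n. U i \<omega> *\<^sub>R Uh n i \<omega>)
                     - (1 / sqrt (real (2*n))) *\<^sub>R (\<Sum>i<2*n. U i \<omega> *\<^sub>R Ups (Z i \<omega>)))"
proof -
  have X_iv: "iv_regressors (X i \<omega>) = T i \<omega>" "iv_instrument (X i \<omega>) = Z i \<omega>"
    "iv_residual \<theta> (X i \<omega>) = U i \<omega>" for i \<omega>
    by (simp_all add: X_def T_def Z_def U_def iv_regressors_def iv_instrument_def iv_residual_def)
  interpret prob_space M by fact
  have U_sq: "integrable M (\<lambda>\<omega>. (U 0 \<omega>)\<^sup>2)"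
  proof (rule integrable_power2_if_integrable_abs_powr[OF _ _ assms(22)])
    show "U 0 \<in> borel_measurable M"
      using measurable_compose[OF _ measurable_iv_residual, of "X 0" M \<theta>] assms(11) by (simp add: X_iv)
  qed (use assms(21) in simp)
  interpret cross_fitting_residual M X iv_instrument "iv_residual \<theta>" Mb
  proof (rule cross_fitting_residual_iv)
    show "iid_sequence M X"
      using assms(10-13) by (simp add: iid_sequence_def iid_sequence_axioms_def)
  qed (use assms(14,26) U_sq in \<open>unfold X_iv, auto simp: X_def elim: eventually_mono\<close>)
  have block_eq: "block K \<omega> = restrict (\<lambda>i. (Y i \<omega>, D i \<omega>, W i \<omega>)) K" for K \<omega>
    unfolding block_def by (simp add: X_def)
  have "crossfit S1 g1 g2 = Uh"
    by (simp add: fun_eq_iff crossfit_def Uh_def block_eq X_iv Z_def)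
  moreover have "(\<lambda>n. mse ({..<2*n} - S1 n) (g1 n) Ups) \<longlonglongrightarrow> 0" "(\<lambda>n. mse (S1 n) (g2 n) Ups) \<longlonglongrightarrow> 0"
    using assms(19,20) by (simp_all add: mse_def block_eq X_iv Uh1_def Uh2_def PZ_def Z_def)
  ultimately show ?thesis
    using op1_crossfit_outer[of g1 S1 g2 Ups iv_regressors] op1_crossfit_score[of S1 g1 g2 Ups] assms(15-18,24)
    by (simp add: X_iv S2_def)
qed

end
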